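(* Let $\alpha>1$, $s>0$, $D\ge1$, and restrict to graphs in which every node has out-degree at most $D$. Suppose that for every pair of node-level adjacent datasets $\mathcal{D},\mathcal{D}'$ (both satisfying the degree bound) the DPDGC weights satisfy $D_\alpha((\mathbf{W}^{(A)},\mathbf{b})\,\|\,(\mathbf{W}^{(A)\prime},\mathbf{b}'))\le\gamma_1$, and that the algorithm $\mathcal{B}$ is $(\alpha,\gamma_2)$-Rényi DP with respect to single-row replacement, i.e. $D_\alpha(\mathcal{B}(\mathbf{X},\mathbf{Y},\mathbf{Z})\,\|\,\mathcal{B}(\mathbf{X}',\mathbf{Y}',\mathbf{Z}'))\le\gamma_2$ whenever the inputs differ only in the $r$-th rows of $\mathbf{X}$ and $\mathbf{Z}$ and (if $r\le m$) of $\mathbf{Y}$, for some $r$. Then the DPDGC model is node $(\alpha,\gamma_1+\gamma_2+\frac{2D\alpha}{2s^2})$-GDP: for every $v\in[n]\setminus[m]$ and every pair of node-level adjacent datasets $\mathcal{D},\mathcal{D}'$ with replaced index $r\neq v$, $D_\alpha(\mathcal{M}(v;\mathcal{D})\,\|\,\mathcal{M}(v;\mathcal{D}'))\le\gamma_1+\gamma_2+\frac{2D\alpha}{2s^2}$.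
   Context: A graph dataset is $\mathcal{D}=(\mathbf{X},\mathbf{Y},\mathbf{A})$ with node set $[n]$, $\mathbf{X}\in\mathbb{R}^{n\times F}$, $\mathbf{Y}\in\{0,1\}^{m\times C}$ (one-hot labels of nodes $1,\dots,m$; nodes in $[n]\setminus[m]$ are to be predicted), and $\mathbf{A}\in\{0,1\}^{n\times n}$ the adjacency matrix of a directed graph without self-loops; the out-degree of $r$ is $\sum_i\mathbf{A}_{ir}$. Node-level adjacency: there is $r\in[n]$ such that $\mathcal{D}'$ is obtained from $\mathcal{D}$ by replacing $\mathbf{X}_r$ arbitrarily, $\mathbf{Y}_r$ (if $r\le m$) by an arbitrary one-hot vector, and arbitrarily changing entries of row $r$ and column $r$ of $\mathbf{A}$ (no self-loops), all else unchanged; $r$ is the replaced index. Rényi divergence of order $\alpha>1$: $D_\alpha(X\|Y)=\frac{1}{\alpha-1}\log\mathbb{E}_{x\sim Q}[(P(x)/Q(x))^\alpha]$. DPDGC model: $(\mathbf{W}^{(A)},\mathbf{b})$ is a random output of a randomized algorithm on the dataset, with every row of $\mathbf{W}^{(A)}\in\mathbb{R}^{n\times h}$ of Euclidean norm $1$ and $\mathbf{b}\in\mathbb{R}^h$; $\mathbf{Z}=\mathbf{A}\mathbf{W}^{(A)}+\mathbf{1}_n\mathbf{b}^\top+\mathbf{N}$ with $\mathbf{N}$ having i.i.d. $\mathcal{N}(0,s^2)$ entries independent of everything else; $\Theta=\mathcal{B}(\mathbf{X},\mathbf{Y},\mathbf{Z})$ for a randomized algorithm $\mathcal{B}$ with independent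 internal randomness; $\widehat{\mathbf{Y}}_v=g(\Theta,\mathbf{X}_v,\mathbf{Z}_v)$ for a fixed deterministic $g$; and $\mathcal{M}(v;\mathcal{D})=(\widehat{\mathbf{Y}}_v,(\mathbf{W}^{(A)},\mathbf{b},\Theta))$. *)

theory Defs
  imports "HOL-Probability.Probability"
begin

definition renyi_div :: "real \<Rightarrow> 'a measure \<Rightarrow> 'a measure \<Rightarrow> ereal" where
  "renyi_div \<alpha> P Q =
     (let I = (\<integral>\<^sup>+ x. ennreal (enn2real (RN_deriv Q P x) powr \<alpha>) \<partial>Q)
      in if absolutely_continuous Q P \<and> I < \<infinity>
         then ereal (ln (enn2real I) / (\<alpha> - 1)) else \<infinity>)"

text \<open>Datasets: node set = finite type 'n; X :: n x F feature matrix (rows X $ v);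
  Y v = Some c is the one-hot label (class c) of a labelled node, None for nodes to be
  predicted; A i j = (A_{ij} = 1), directed adjacency matrix.\<close>
type_synonym ('f, 'n, 'c) dataset = "(real^'f^'n) \<times> ('n \<Rightarrow> 'c option) \<times> ('n \<Rightarrow> 'n \<Rightarrow> bool)"

definition labels_wf :: "'n set \<Rightarrow> ('n \<Rightarrow> 'c option) \<Rightarrow> bool" where
  "labels_wf L Y \<longleftrightarrow> (\<forall>v. Y v \<noteq> None \<longleftrightarrow> v \<in> L)"

definition dataset_wf :: "'n::finite set \<Rightarrow> ('f, 'n, 'c) dataset \<Rightarrow> bool" where
  "dataset_wf L D \<longleftrightarrow> (case D of (X, Y, A) \<Rightarrow> labels_wf L Y \<and> (\<forall>i. \<not> A i i))"

definition out_degree :: "('n \<Rightarrow> 'n \<Rightarrow> bool) \<Rightarrow> 'n \<Rightarrow> nat" where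
  "out_degree A r = card {i. A i r}"

definition deg_bounded :: "real \<Rightarrow> ('f, 'n::finite, 'c) dataset \<Rightarrow> bool" where
  "deg_bounded Dg D \<longleftrightarrow> (case D of (X, Y, A) \<Rightarrow> (\<forall>r. real (out_degree A r) \<le> Dg))"

definition node_adjacent :: "'n::finite set \<Rightarrow> ('f, 'n, 'c) dataset \<Rightarrow> ('f, 'n, 'c) dataset \<Rightarrow> 'n \<Rightarrow> bool" where
  "node_adjacent L D D' r \<longleftrightarrow>
     (case D of (X, Y, A) \<Rightarrow> case D' of (X', Y', A') \<Rightarrow>
        dataset_wf L D \<and> dataset_wf L D' \<and>
        (\<forall>i. i \<noteq> r \<longrightarrow> X $ i = X' $ i) \<and>
        (\<forall>i. i \<noteq> r \<longrightarrow> Y i = Y' i) \<and>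
        (\<forall>i j. i \<noteq> r \<and> j \<noteq> r \<longrightarrow> A i j = A' i j))"

definition gauss_noise :: "real \<Rightarrow> (real^'h^'n) measure" where
  "gauss_noise s = density lborel
     (\<lambda>N. \<Prod>i\<in>UNIV. \<Prod>k\<in>UNIV. ennreal (normal_density 0 s (N $ i $ k)))"

definition Zmat :: "('n::finite \<Rightarrow> 'n \<Rightarrow> bool) \<Rightarrow> real^'h^'n \<Rightarrow> real^'h \<Rightarrow> real^'h^'n \<Rightarrow> real^'h^'n" where
  "Zmat A W b N = (\<chi> i. (\<Sum>j\<in>{j. A i j}. W $ j) + b + N $ i)"

text \<open>DPDGC mechanism M(v; D) = (hat Y_v, (W, b, Theta)).  WA: randomized algorithm
  producing (W, b); B: randomized algorithm with parameter space P; g: deterministic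
  prediction map with output space Yo.\<close>
definition dpdgc_mech ::
  "(('f, 'n::finite, 'c) dataset \<Rightarrow> ((real^'h^'n) \<times> (real^'h)) measure) \<Rightarrow> real \<Rightarrow>
   (real^'f^'n \<Rightarrow> ('n \<Rightarrow> 'c option) \<Rightarrow> real^'h^'n \<Rightarrow> 'p measure) \<Rightarrow> 'p measure \<Rightarrow>
   ('p \<Rightarrow> real^'f \<Rightarrow> real^'h \<Rightarrow> 'y) \<Rightarrow> 'y measure \<Rightarrow>
   'n \<Rightarrow> ('f, 'n, 'c) dataset \<Rightarrow> ('y \<times> (((real^'h^'n) \<times> (real^'h)) \<times> 'p)) measure" where
  "dpdgc_mech WA s B P g Yo v D =
     (case D of (X, Y, A) \<Rightarrow>
        WA D \<bind> (\<lambda>(W, b). gauss_noise s \<bind> (\<lambda>N.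
          let Z = Zmat A W b N in
          B X Y Z \<bind> (\<lambda>\<theta>. return (Yo \<Otimes>\<^sub>M (borel \<Otimes>\<^sub>M P))
                                  (g \<theta> (X $ v) (Z $ v), ((W, b), \<theta>))))))"

end

theory Submission
  imports Defs
begin

text \<open>Let \<open>\<beta> = \<alpha>/(\<alpha>-1)\<close>. By H\<ouml>lder's inequality, and conversely by testing against truncations of
  \<open>(dP/dQ) powr (\<alpha>-1)\<close>, \<open>D\<^sub>\<alpha>(P\<parallel>Q) \<le> \<gamma>\<close> holds iff \<open>\<integral>f dP \<le> exp (\<gamma> (\<alpha>-1)/\<alpha>) \<cdot> \<parallel>f\<parallel>\<close> for all bounded
  \<open>f \<ge> 0\<close>, the norm being that of \<open>L\<^sup>\<beta>(Q)\<close>. These constants multiply along Markov kernels, which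
  gives adaptive composition: \<open>D\<^sub>\<alpha>(P \<bind> K\<parallel>Q \<bind> K') \<le> D\<^sub>\<alpha>(P\<parallel>Q) + sup\<^sub>x D\<^sub>\<alpha>(K x\<parallel>K' x)\<close>.

  The mechanism composes three stages: the weights \<open>(W, b)\<close>, the noise \<open>N\<close>, and \<open>\<B>\<close> followed by the
  deterministic readout \<open>g\<close>. Replacing node \<open>r\<close> changes row \<open>i \<noteq> r\<close> of \<open>A W\<close> by \<open>0\<close> or \<open>\<plusminus>W\<^sub>r\<close>, and
  only in rows with \<open>A\<^sub>i\<^sub>r = 1\<close> in one of the two graphs, so this perturbation \<open>\<delta>\<close> has \<open>\<parallel>\<delta>\<parallel>\<^sup>2 \<le> 2D\<close>.
  Coupling \<open>N\<close> with \<open>N - \<delta>\<close> makes the two feature matrices \<open>Z\<close> agree off row \<open>r\<close>, where the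
  privacy of \<open>\<B>\<close> applies, and the shift costs the Gaussian divergence \<open>\<alpha>\<parallel>\<delta>\<parallel>\<^sup>2/(2s\<^sup>2)\<close>.\<close>

lemma Holder_inequality:
  fixes u v :: "'a \<Rightarrow> real"
  assumes a: "a > 1" and b: "b > 1" and ab: "1/a + 1/b = 1"
    and [measurable]: "u \<in> borel_measurable M" "v \<in> borel_measurable M"
    and u0: "\<And>x. x \<in> space M \<Longrightarrow> 0 \<le> u x" and v0: "\<And>x. x \<in> space M \<Longrightarrow> 0 \<le> v x"
    and iu: "integrable M (\<lambda>x. u x powr a)" and iv: "integrable M (\<lambda>x. v x powr b)"
    and iuv: "integrable M (\<lambda>x. u x * v x)"
  shows "(\<integral>x. u x * v x \<partial>M) \<le> (\<integral>x. u x powr a \<partial>M) powr (1/a) * (\<integral>x. v x powr b \<partial>M) powr (1/b)"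
proof -
  define A where "A = (\<integral>x. u x powr a \<partial>M)"
  define B where "B = (\<integral>x. v x powr b \<partial>M)"
  have A0: "A \<ge> 0" and B0: "B \<ge> 0" unfolding A_def B_def by (auto intro: integral_nonneg_AE)
  show ?thesis
  proof (cases "A = 0 \<or> B = 0")
    case True
    then have "AE x in M. u x * v x = 0"
    proof
      assume "A = 0"
      then have "AE x in M. u x powr a = 0"
        using iu unfolding A_def by (subst integral_nonneg_eq_0_iff_AE[symmetric]) auto
      then show ?thesis using AE_space by eventually_elim (use u0 in auto)
    next
      assume "B = 0"
      then have "AE x in M. v x powr b = 0"
        using iv unfolding B_def by (subst integral_nonneg_eq_0_iff_AE[symmetric]) auto
      then show ?thesis using AE_space by eventually_elim (use v0 in auto)
    qed
    then have "(\<integral>x. u x * v x \<partial>M) = 0" by (simp add: integral_eq_zero_AE)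
    then show ?thesis unfolding A_def[symmetric] B_def[symmetric] using A0 B0 by simp
  next
    case False
    then have Ap: "A > 0" and Bp: "B > 0" using A0 B0 by auto
    define A' where "A' = A powr (1/a)"
    define B' where "B' = B powr (1/b)"
    have A': "A' > 0" "A' powr a = A" unfolding A'_def using Ap a by (auto simp: powr_powr)
    have B': "B' > 0" "B' powr b = B" unfolding B'_def using Bp b by (auto simp: powr_powr)
    have Young: "u x * v x / (A' * B') \<le> u x powr a / (a * A) + v x powr b / (b * B)"
      if x: "x \<in> space M" for x
    proof -
      have "(u x / A') * (v x / B') \<le> (u x / A') powr a / a + (v x / B') powr b / b"
        using Youngs_inequality[OF a b ab, of "u x / A'" "v x / B'"] u0[OF x] v0[OF x] A' B' by simp
      also have "(u x / A') powr a = u x powr a / A"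
        using A' u0[OF x] by (simp add: powr_divide)
      also have "(v x / B') powr b = v x powr b / B"
        using B' v0[OF x] by (simp add: powr_divide)
      finally show ?thesis by (simp add: field_simps)
    qed
    have "(\<integral>x. u x * v x / (A' * B') \<partial>M) \<le> (\<integral>x. u x powr a / (a * A) + v x powr b / (b * B) \<partial>M)"
      using Young iu iv iuv by (intro integral_mono) auto
    also have "\<dots> = A / (a * A) + B / (b * B)"
      using iu iv unfolding A_def B_def by simp
    also have "\<dots> = 1" using Ap Bp ab a b by (simp add: field_simps)
    finally have "(\<integral>x. u x * v x \<partial>M) / (A' * B') \<le> 1" by simp
    then show ?thesis using A' B' unfolding A_def[symmetric] B_def[symmetric] A'_def B'_def
      by (simp add: divide_le_eq mult.commute)
  qed
qed

lemma integrable_bounded_nonneg: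
  fixes f :: "'a \<Rightarrow> real"
  assumes "finite_measure M" "f \<in> borel_measurable M" "\<And>x. x \<in> space M \<Longrightarrow> 0 \<le> f x"
    "\<And>x. x \<in> space M \<Longrightarrow> f x \<le> B"
  shows "integrable M f"
  using assms by (intro finite_measure.integrable_const_bound[where B=B]) (auto intro!: AE_I2)

text \<open>\<open>renyi_dominated \<alpha> P Q c\<close> bounds the pairing of \<open>P\<close> with bounded nonnegative test functions
  by \<open>c\<close> times their \<open>L\<^sup>\<beta>(Q)\<close> norm, \<open>\<beta> = \<alpha>/(\<alpha>-1)\<close>. By \<open>L\<^sup>\<alpha>\<close>--\<open>L\<^sup>\<beta>\<close> duality the least such \<open>c\<close> is
  \<open>\<parallel>dP/dQ\<parallel>\<^sub>\<alpha> = exp ((\<alpha>-1)/\<alpha> \<cdot> D\<^sub>\<alpha>(P\<parallel>Q))\<close>; unlike the divergence itself, this form composes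
  multiplicatively along Markov kernels.\<close>
definition renyi_dominated :: "real \<Rightarrow> 'a measure \<Rightarrow> 'a measure \<Rightarrow> real \<Rightarrow> bool" where
  "renyi_dominated \<alpha> P Q c \<longleftrightarrow> (\<forall>f::'a\<Rightarrow>real. f \<in> borel_measurable P \<longrightarrow> (\<forall>x\<in>space P. 0 \<le> f x) \<longrightarrow>
     (\<exists>B. \<forall>x\<in>space P. f x \<le> B) \<longrightarrow>
     (\<integral>x. f x \<partial>P) \<le> c * (\<integral>x. f x powr (\<alpha>/(\<alpha>-1)) \<partial>Q) powr ((\<alpha>-1)/\<alpha>))"

lemma renyi_dominated_mono: "renyi_dominated \<alpha> P Q c \<Longrightarrow> c \<le> d \<Longrightarrow> renyi_dominated \<alpha> P Q d"
  unfolding renyi_dominated_def by (smt (verit, best) mult_right_mono powr_ge_zero)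

lemma renyi_dominatedD:
  assumes "renyi_dominated \<alpha> P Q c" and sets: "sets P = sets M" and "f \<in> borel_measurable M"
    and "\<And>x. x \<in> space M \<Longrightarrow> 0 \<le> f x" and "\<And>x. x \<in> space M \<Longrightarrow> f x \<le> B"
  shows "(\<integral>x. f x \<partial>P) \<le> c * (\<integral>x. f x powr (\<alpha>/(\<alpha>-1)) \<partial>Q) powr ((\<alpha>-1)/\<alpha>)"
  using assms sets_eq_imp_space_eq[OF sets] measurable_cong_sets[OF sets refl]
  unfolding renyi_dominated_def by metis

lemma renyi_dominated_density:
  fixes q :: "'a \<Rightarrow> real"
  assumes a: "\<alpha> > 1" and Q: "prob_space Q" and q[measurable]: "q \<in> borel_measurable Q"
    and q0: "\<And>x. 0 \<le> q x" and P: "P = density Q (\<lambda>x. ennreal (q x))"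
    and iq: "integrable Q (\<lambda>x. q x powr \<alpha>)"
  shows "renyi_dominated \<alpha> P Q ((\<integral>x. q x powr \<alpha> \<partial>Q) powr (1/\<alpha>))"
  unfolding renyi_dominated_def
proof (intro allI impI)
  fix f :: "'a \<Rightarrow> real"
  assume fm: "f \<in> borel_measurable P" and f0: "\<forall>x\<in>space P. 0 \<le> f x" and "\<exists>B. \<forall>x\<in>space P. f x \<le> B"
  then obtain B where fB: "\<forall>x\<in>space P. f x \<le> B" by blast
  have sp: "space P = space Q" "sets P = sets Q" using P by auto
  have [measurable]: "f \<in> borel_measurable Q" using fm sp by (simp add: measurable_def)
  interpret Q: prob_space Q by fact
  define \<beta> where "\<beta> = \<alpha>/(\<alpha>-1)"
  have b: "\<beta> > 1" and ab: "1/\<beta> + 1/\<alpha> = 1" using a unfolding \<beta>_def by (auto simp: field_simps)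
  have B0: "0 \<le> B" using f0 fB Q.not_empty sp by force
  have ib: "integrable Q (\<lambda>x. f x powr \<beta>)"
    using f0 fB sp b
    by (intro integrable_bounded_nonneg[OF Q.finite_measure_axioms, where B="B powr \<beta>"])
       (auto intro!: powr_mono2)
  have q_le: "q x \<le> 1 + q x powr \<alpha>" for x
  proof (cases "q x \<le> 1")
    case False
    then have "q x powr 1 \<le> q x powr \<alpha>" using a by (intro powr_mono) auto
    then show ?thesis using False by simp
  qed (use powr_ge_zero[of "q x" \<alpha>] in linarith)
  have iqf: "integrable Q (\<lambda>x. f x * q x)"
  proof (rule Bochner_Integration.integrable_bound)
    show "integrable Q (\<lambda>x. B * (1 + q x powr \<alpha>))" using iq by auto
    show "AE x in Q. norm (f x * q x) \<le> norm (B * (1 + q x powr \<alpha>))"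
      using f0 fB sp q0 q_le B0 by (intro AE_I2) (auto intro!: mult_mono)
  qed measurable
  have "(\<integral>x. f x \<partial>P) = (\<integral>x. f x * q x \<partial>Q)"
    unfolding P by (subst integral_density) (auto simp: q0 mult.commute)
  also have "\<dots> \<le> (\<integral>x. f x powr \<beta> \<partial>Q) powr (1/\<beta>) * (\<integral>x. q x powr \<alpha> \<partial>Q) powr (1/\<alpha>)"
    using Holder_inequality[OF b a ab, where u=f and v=q] f0 sp q0 ib iq iqf by auto
  finally show "(\<integral>x. f x \<partial>P) \<le> (\<integral>x. q x powr \<alpha> \<partial>Q) powr (1/\<alpha>) * (\<integral>x. f x powr (\<alpha>/(\<alpha>-1)) \<partial>Q) powr ((\<alpha>-1)/\<alpha>)"
    unfolding \<beta>_def by (simp add: mult.commute)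
qed

lemma renyi_dominated_refl:
  assumes "\<alpha> > 1" "prob_space Q"
  shows "renyi_dominated \<alpha> Q Q 1"
proof -
  interpret prob_space Q by fact
  show ?thesis
    using renyi_dominated_density[OF assms, of "\<lambda>_. 1"] by (simp add: density_1 prob_space)
qed

lemma density_enn2real_RN_deriv:
  assumes Q: "prob_space Q" and P: "prob_space P" and ac: "absolutely_continuous Q P" and s: "sets P = sets Q"
  shows "P = density Q (\<lambda>x. ennreal (enn2real (RN_deriv Q P x)))"
proof -
  interpret Q: prob_space Q by fact
  interpret P: prob_space P by fact
  have "AE x in Q. RN_deriv Q P x \<noteq> \<infinity>"
    by (rule Q.RN_deriv_finite[OF _ ac s]) unfold_locales
  then have "density Q (RN_deriv Q P) = density Q (\<lambda>x. ennreal (enn2real (RN_deriv Q P x)))"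
    by (intro density_cong) (auto elim!: eventually_mono simp: ennreal_enn2real_if)
  then show ?thesis using Q.density_RN_deriv[OF ac s] by simp
qed

lemma renyi_dominated_of_renyi_div:
  assumes a: "\<alpha> > 1" and P: "prob_space P" and Q: "prob_space Q" and s: "sets P = sets Q"
    and r: "renyi_div \<alpha> P Q \<le> ereal \<gamma>"
  shows "renyi_dominated \<alpha> P Q (exp (\<gamma> * (\<alpha>-1) / \<alpha>))"
proof -
  define q where "q x = enn2real (RN_deriv Q P x)" for x
  define I where "I = (\<integral>\<^sup>+ x. ennreal (q x powr \<alpha>) \<partial>Q)"
  have cond: "absolutely_continuous Q P \<and> I < \<infinity>"
    using r unfolding renyi_div_def q_def I_def Let_def by (auto split: if_splits)
  then have ln_I: "ln (enn2real I) \<le> \<gamma> * (\<alpha> - 1)"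
    using r a unfolding renyi_div_def q_def[symmetric] I_def[symmetric] by (simp add: divide_le_eq)
  have [measurable]: "q \<in> borel_measurable Q" unfolding q_def by measurable
  have iq: "integrable Q (\<lambda>x. q x powr \<alpha>)"
    using cond unfolding I_def by (intro integrableI_nonneg) auto
  have "(\<integral>x. q x powr \<alpha> \<partial>Q) = enn2real I"
    unfolding I_def by (subst integral_eq_nn_integral) auto
  moreover have "P = density Q (\<lambda>x. ennreal (q x))"
    unfolding q_def using density_enn2real_RN_deriv[OF Q P _ s] cond by simp
  ultimately have dom: "renyi_dominated \<alpha> P Q (enn2real I powr (1/\<alpha>))"
    using renyi_dominated_density[OF a Q _ _ _ iq] unfolding q_def by simp
  have "enn2real I powr (1/\<alpha>) \<le> exp (\<gamma> * (\<alpha>-1) / \<alpha>)"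
  proof (cases "enn2real I = 0")
    case False
    then have "enn2real I powr (1/\<alpha>) = exp (ln (enn2real I) / \<alpha>)"
      by (simp add: powr_def)
    also have "\<dots> \<le> exp (\<gamma> * (\<alpha>-1) / \<alpha>)"
      using ln_I a by (simp add: divide_right_mono)
    finally show ?thesis .
  qed simp
  then show ?thesis using renyi_dominated_mono dom by blast
qed

lemma renyi_dominated_absolutely_continuous:
  assumes a: "\<alpha> > 1" and P: "prob_space P" and Q: "prob_space Q" and s: "sets P = sets Q"
    and dom: "renyi_dominated \<alpha> P Q c"
  shows "absolutely_continuous Q P"
  unfolding absolutely_continuous_def
proof
  interpret P: prob_space P by fact
  interpret Q: prob_space Q by fact
  fix A assume "A \<in> null_sets Q"
  then have A: "A \<in> sets Q" "measure Q A = 0" by (auto simp: Q.emeasure_eq_measure)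
  have "measure P A = (\<integral>x. indicator A x \<partial>P)" using A s by simp
  also have "\<dots> \<le> c * (\<integral>x. (indicator A x :: real) powr (\<alpha>/(\<alpha>-1)) \<partial>Q) powr ((\<alpha>-1)/\<alpha>)"
    using A by (intro renyi_dominatedD[OF dom s, of _ 1]) auto
  also have "(\<lambda>x. (indicator A x :: real) powr (\<alpha>/(\<alpha>-1))) = indicator A"
    by (auto simp: indicator_def)
  finally have "measure P A \<le> 0" using A a by simp
  then show "A \<in> null_sets P"
    using A s by (simp add: P.emeasure_eq_measure null_sets_def measure_le_0_iff)
qed

lemma le_powr_of_le_mult_powr:
  fixes H c \<alpha> :: real
  assumes a: "\<alpha> > 1" and H0: "0 \<le> H" and H: "H \<le> c * H powr ((\<alpha>-1)/\<alpha>)"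
  shows "H \<le> c powr \<alpha>"
proof (cases "H = 0")
  case False
  then have Hp: "H > 0" using H0 by simp
  have "H powr (1/\<alpha>) * H powr ((\<alpha>-1)/\<alpha>) = H"
    using Hp a by (simp add: powr_add[symmetric] add_divide_distrib[symmetric])
  with H have "H powr (1/\<alpha>) * H powr ((\<alpha>-1)/\<alpha>) \<le> c * H powr ((\<alpha>-1)/\<alpha>)" by simp
  then have "H powr (1/\<alpha>) \<le> c" using Hp by (simp add: mult_le_cancel_right)
  then have "(H powr (1/\<alpha>)) powr \<alpha> \<le> c powr \<alpha>" using a by (intro powr_mono2) auto
  then show ?thesis using Hp a by (simp add: powr_powr)
qed simp

text \<open>Testing with \<open>q powr (\<alpha>-1)\<close> would directly give \<open>H \<le> c \<cdot> H powr ((\<alpha>-1)/\<alpha>)\<close> for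
  \<open>H = \<integral>q powr \<alpha> dQ\<close>, but that function need not be bounded, so \<open>q\<close> is truncated at \<open>n\<close>.\<close>
lemma integral_truncated_powr_le_of_renyi_dominated:
  fixes q :: "'a \<Rightarrow> real"
  assumes a: "\<alpha> > 1" and Q: "prob_space Q" and q[measurable]: "q \<in> borel_measurable Q"
    and q0: "\<And>x. 0 \<le> q x" and iq: "integrable Q q"
    and P: "P = density Q (\<lambda>x. ennreal (q x))" and dom: "renyi_dominated \<alpha> P Q c"
  shows "(\<integral>x. min (q x) (real n) powr \<alpha> \<partial>Q) \<le> c powr \<alpha>" (is "?H \<le> _")
proof (rule le_powr_of_le_mult_powr[OF a])
  interpret Q: prob_space Q by fact
  define f where "f x = min (q x) (real n) powr (\<alpha>-1)" for x
  have [measurable]: "f \<in> borel_measurable Q" unfolding f_def by measurable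
  have f_le: "f x \<le> real n powr (\<alpha>-1)" for x
    unfolding f_def using a q0[of x] by (intro powr_mono2) auto
  have ifq: "integrable Q (\<lambda>x. q x * f x)"
  proof (rule Bochner_Integration.integrable_bound)
    show "integrable Q (\<lambda>x. q x * real n powr (\<alpha>-1))" using iq by simp
    show "AE x in Q. norm (q x * f x) \<le> norm (q x * real n powr (\<alpha>-1))"
      using f_le q0 by (intro AE_I2) (auto simp: f_def intro!: mult_left_mono)
  qed measurable
  have pt: "min (q x) (real n) powr \<alpha> \<le> q x * f x" for x
  proof (cases "min (q x) (real n) \<le> 0")
    case False
    then have "min (q x) (real n) powr \<alpha> = min (q x) (real n) * f x" unfolding f_def by (simp add: powr_diff)
    then show ?thesis by (auto simp: f_def intro!: mult_right_mono)
  next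
    case True
    then have "min (q x) (real n) = 0" using q0[of x] by linarith
    then show ?thesis by (simp add: f_def)
  qed
  show "0 \<le> ?H" by (auto intro: integral_nonneg_AE)
  have "integrable Q (\<lambda>x. min (q x) (real n) powr \<alpha>)"
    using a q0 by (intro integrable_bounded_nonneg[OF Q.finite_measure_axioms, where B="real n powr \<alpha>"])
       (auto intro!: powr_mono2)
  then have "?H \<le> (\<integral>x. q x * f x \<partial>Q)"
    using pt ifq by (intro integral_mono)
  also have "\<dots> = (\<integral>x. f x \<partial>P)"
    unfolding P by (subst integral_density) (auto simp: q0)
  also have "\<dots> \<le> c * (\<integral>x. f x powr (\<alpha>/(\<alpha>-1)) \<partial>Q) powr ((\<alpha>-1)/\<alpha>)"
    using f_le P by (intro renyi_dominatedD[OF dom, of Q]) (auto simp: f_def)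
  also have "(\<lambda>x. f x powr (\<alpha>/(\<alpha>-1))) = (\<lambda>x. min (q x) (real n) powr \<alpha>)"
    unfolding f_def using a by (simp add: powr_powr)
  finally show "?H \<le> c * ?H powr ((\<alpha>-1)/\<alpha>)" .
qed

lemma nn_integral_powr_le_of_renyi_dominated:
  fixes q :: "'a \<Rightarrow> real"
  assumes a: "\<alpha> > 1" and Q: "prob_space Q" and q[measurable]: "q \<in> borel_measurable Q"
    and q0: "\<And>x. 0 \<le> q x" and iq: "integrable Q q"
    and P: "P = density Q (\<lambda>x. ennreal (q x))" and dom: "renyi_dominated \<alpha> P Q c"
  shows "(\<integral>\<^sup>+x. ennreal (q x powr \<alpha>) \<partial>Q) \<le> ennreal (c powr \<alpha>)"
proof -
  interpret Q: prob_space Q by fact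
  define qn where "qn n x = min (q x) (real n) powr \<alpha>" for n x
  have qn_mono: "qn m x \<le> qn n x" if "m \<le> n" for m n x
    unfolding qn_def using a q0[of x] that by (intro powr_mono2) auto
  have "incseq (\<lambda>n x. ennreal (qn n x))"
    by (intro incseq_SucI le_funI ennreal_leI qn_mono) simp
  moreover have "ennreal (q x powr \<alpha>) = (SUP n. ennreal (qn n x))" for x
  proof (rule antisym)
    obtain n :: nat where "q x \<le> real n" using real_arch_simple by blast
    then have "ennreal (q x powr \<alpha>) = ennreal (qn n x)" by (simp add: qn_def)
    then show "ennreal (q x powr \<alpha>) \<le> (SUP n. ennreal (qn n x))"
      by (metis SUP_upper UNIV_I)
    have "qn n x \<le> q x powr \<alpha>" for n
      unfolding qn_def using a q0[of x] by (intro powr_mono2) auto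
    then show "(SUP n. ennreal (qn n x)) \<le> ennreal (q x powr \<alpha>)"
      by (intro SUP_least ennreal_leI)
  qed
  ultimately have "(\<integral>\<^sup>+x. ennreal (q x powr \<alpha>) \<partial>Q) = (SUP n. \<integral>\<^sup>+ x. ennreal (qn n x) \<partial>Q)"
    by (simp only:) (rule nn_integral_monotone_convergence_SUP; simp add: qn_def)
  also have "\<dots> = (SUP n. ennreal (\<integral>x. qn n x \<partial>Q))"
  proof (intro SUP_cong refl nn_integral_eq_integral)
    fix n
    show "integrable Q (qn n)"
      unfolding qn_def using a q0
      by (intro integrable_bounded_nonneg[OF Q.finite_measure_axioms, where B="real n powr \<alpha>"])
         (auto intro!: powr_mono2)
  qed (simp add: qn_def)
  also have "\<dots> \<le> ennreal (c powr \<alpha>)"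
    unfolding qn_def
    by (intro SUP_least ennreal_leI integral_truncated_powr_le_of_renyi_dominated[OF assms])
  finally show ?thesis .
qed

lemma renyi_div_le_of_renyi_dominated:
  assumes a: "\<alpha> > 1" and P: "prob_space P" and Q: "prob_space Q" and s: "sets P = sets Q"
    and dom: "renyi_dominated \<alpha> P Q c" and c: "c > 0"
  shows "renyi_div \<alpha> P Q \<le> ereal (\<alpha> * ln c / (\<alpha>-1))"
proof -
  interpret P: prob_space P by fact
  define q where "q x = enn2real (RN_deriv Q P x)" for x
  define I where "I = (\<integral>\<^sup>+ x. ennreal (q x powr \<alpha>) \<partial>Q)"
  have [measurable]: "q \<in> borel_measurable Q" unfolding q_def by measurable
  have q0: "\<And>x. 0 \<le> q x" unfolding q_def by simp
  have ac: "absolutely_continuous Q P"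
    by (rule renyi_dominated_absolutely_continuous[OF a P Q s dom])
  have dens: "P = density Q (\<lambda>x. ennreal (q x))"
    unfolding q_def by (rule density_enn2real_RN_deriv[OF Q P ac s])
  have "(\<integral>\<^sup>+x. ennreal (q x) \<partial>Q) = emeasure P (space P)"
    unfolding dens by (simp add: emeasure_density)
  then have nn_q: "(\<integral>\<^sup>+x. ennreal (q x) \<partial>Q) = 1"
    by (simp add: P.emeasure_space_1)
  have iq: "integrable Q q" using nn_q q0 by (intro integrableI_nonneg) auto
  have I: "I \<le> ennreal (c powr \<alpha>)"
    unfolding I_def by (rule nn_integral_powr_le_of_renyi_dominated[OF a Q _ q0 iq dens dom]) simp
  then have I_fin: "I < \<infinity>"
    using le_less_trans[OF I ennreal_less_top] by (simp add: infinity_ennreal_def)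
  have "I \<noteq> 0"
  proof
    assume "I = 0"
    then have "AE x in Q. ennreal (q x powr \<alpha>) = 0"
      unfolding I_def by (subst (asm) nn_integral_0_iff_AE) auto
    then have "AE x in Q. ennreal (q x) = 0"
      by eventually_elim (use q0 in simp)
    then have "(\<integral>\<^sup>+x. ennreal (q x) \<partial>Q) = 0" by (simp add: nn_integral_0_iff_AE)
    then show False using nn_q by simp
  qed
  then have I_pos: "enn2real I > 0"
    using I_fin enn2real_eq_0_iff[of I] enn2real_nonneg[of I] by (auto simp: order_less_le)
  have "enn2real I \<le> c powr \<alpha>" using I by (simp add: enn2real_leI)
  then have "ln (enn2real I) \<le> ln (c powr \<alpha>)" using I_pos c by (subst ln_le_cancel_iff) auto
  also have "\<dots> = \<alpha> * ln c" using c by (simp add: ln_powr)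
  finally have "ln (enn2real I) / (\<alpha> - 1) \<le> \<alpha> * ln c / (\<alpha> - 1)"
    using a by (simp add: divide_right_mono)
  moreover have "renyi_div \<alpha> P Q = ereal (ln (enn2real I) / (\<alpha> - 1))"
    unfolding renyi_div_def q_def[symmetric] I_def[symmetric] Let_def using ac I_fin by auto
  ultimately show ?thesis by simp
qed

lemma prob_algebra_kernelD:
  assumes K: "K \<in> M \<rightarrow>\<^sub>M prob_algebra N" and x: "x \<in> space M"
  shows "prob_space (K x)" "sets (K x) = sets N" "space (K x) = space N"
  using measurable_space[OF K x] sets_eq_imp_space_eq by (auto simp: space_prob_algebra)

lemma integral_kernel_bounded:
  fixes f :: "'b \<Rightarrow> real"
  assumes K: "K \<in> M \<rightarrow>\<^sub>M prob_algebra N" and x: "x \<in> space M" and f[measurable]: "f \<in> borel_measurable N"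
    and f0: "\<And>y. y \<in> space N \<Longrightarrow> 0 \<le> f y" and fB: "\<And>y. y \<in> space N \<Longrightarrow> f y \<le> B"
  shows "0 \<le> (\<integral>y. f y \<partial>K x)" and "(\<integral>y. f y \<partial>K x) \<le> B"
proof -
  interpret Kx: prob_space "K x" using prob_algebra_kernelD(1)[OF K x] .
  have sp: "space (K x) = space N" by (rule prob_algebra_kernelD(3)[OF K x])
  have [measurable]: "f \<in> borel_measurable (K x)"
    unfolding measurable_cong_sets[OF prob_algebra_kernelD(2)[OF K x] refl] by (rule f)
  show "0 \<le> (\<integral>y. f y \<partial>K x)" using f0 sp by (intro integral_nonneg_AE AE_I2) auto
  have "integrable (K x) f"
    using f0 fB sp by (intro integrable_bounded_nonneg[OF Kx.finite_measure_axioms, where B=B]) auto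
  then show "(\<integral>y. f y \<partial>K x) \<le> B" using fB sp by (intro Kx.integral_le_const AE_I2) auto
qed

lemma integral_bind_kernel_bounded:
  fixes f :: "'b \<Rightarrow> real"
  assumes K: "K \<in> M \<rightarrow>\<^sub>M prob_algebra N" and P: "prob_space P" and sP: "sets P = sets M"
    and f[measurable]: "f \<in> borel_measurable N"
    and f0: "\<And>y. y \<in> space N \<Longrightarrow> 0 \<le> f y" and fB: "\<And>y. y \<in> space N \<Longrightarrow> f y \<le> B"
  shows "(\<integral>y. f y \<partial>(P \<bind> K)) = (\<integral>x. (\<integral>y. f y \<partial>K x) \<partial>P)"
proof (rule integral_bind)
  show "K \<in> P \<rightarrow>\<^sub>M subprob_algebra N"
    unfolding measurable_cong_sets[OF sP refl] by (rule measurable_prob_algebraD[OF K])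
  show "finite_measure P" using P by (rule prob_space.finite_measure)
  show "\<bar>f y\<bar> \<le> B" if "y \<in> space N" for y using f0[OF that] fB[OF that] by simp
  show "AE x in P. emeasure (K x) (space (K x)) \<le> ennreal 1"
    using sets_eq_imp_space_eq[OF sP]
    by (intro AE_I2) (auto dest: prob_algebra_kernelD(1)[OF K] simp: prob_space.emeasure_space_1)
qed fact

text \<open>Integrate out the kernel and apply the definition twice: first to \<open>K x\<close> versus \<open>K' x\<close> with
  the test function \<open>f\<close>, then to \<open>P\<close> versus \<open>Q\<close> with \<open>h powr ((\<alpha>-1)/\<alpha>)\<close>, where \<open>h x = \<integral>f\<^sup>\<beta> dK' x\<close>;
  the exponents are conjugate, so \<open>(h powr ((\<alpha>-1)/\<alpha>)) powr \<beta> = h\<close>.\<close>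
lemma integral_bind_le_renyi_dominated:
  fixes f :: "'b \<Rightarrow> real"
  assumes a: "\<alpha> > 1" and P: "prob_space P" and Q: "prob_space Q"
    and sP: "sets P = sets M" and sQ: "sets Q = sets M"
    and K: "K \<in> M \<rightarrow>\<^sub>M prob_algebra N" and K': "K' \<in> M \<rightarrow>\<^sub>M prob_algebra N"
    and dom1: "renyi_dominated \<alpha> P Q c1" and dom2: "AE x in P. renyi_dominated \<alpha> (K x) (K' x) c2"
    and c2: "c2 \<ge> 0" and [measurable]: "f \<in> borel_measurable N"
    and f0: "\<And>y. y \<in> space N \<Longrightarrow> 0 \<le> f y" and fB: "\<And>y. y \<in> space N \<Longrightarrow> f y \<le> B"
  shows "(\<integral>y. f y \<partial>(P \<bind> K)) \<le> c1 * c2 * (\<integral>y. f y powr (\<alpha>/(\<alpha>-1)) \<partial>(Q \<bind> K')) powr ((\<alpha>-1)/\<alpha>)"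
proof -
  interpret P: prob_space P by fact
  have spM: "space P = space M" "space Q = space M"
    using sets_eq_imp_space_eq[OF sP] sets_eq_imp_space_eq[OF sQ] .
  define \<beta> where "\<beta> = \<alpha>/(\<alpha>-1)"
  define e where "e = (\<alpha>-1)/\<alpha>"
  have e: "e > 0" "e * \<beta> = 1" unfolding e_def \<beta>_def using a by auto
  have f\<beta>B: "f y powr \<beta> \<le> B powr \<beta>" if "y \<in> space N" for y
    using f0[OF that] fB[OF that] e by (intro powr_mono2) (auto simp: \<beta>_def)
  define g where "g x = (\<integral>y. f y \<partial>K x)" for x
  define h where "h x = (\<integral>y. f y powr \<beta> \<partial>K' x)" for x
  have [measurable]: "g \<in> borel_measurable M" "h \<in> borel_measurable M"
    unfolding g_def h_def using measurable_prob_algebraD[OF K] measurable_prob_algebraD[OF K'] by measurable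
  have gh_P: "g \<in> borel_measurable P" "(\<lambda>x. h x powr e) \<in> borel_measurable P"
    unfolding measurable_cong_sets[OF sP refl] by measurable
  have g_bd: "0 \<le> g x" "g x \<le> B" if "x \<in> space M" for x
    unfolding g_def using integral_kernel_bounded[OF K that _ f0 fB] by auto
  have h_bd: "0 \<le> h x" "h x \<le> B powr \<beta>" if "x \<in> space M" for x
    unfolding h_def using integral_kernel_bounded[OF K' that _ _ f\<beta>B] by auto
  have "(\<integral>y. f y \<partial>(P \<bind> K)) = (\<integral>x. g x \<partial>P)"
    unfolding g_def by (rule integral_bind_kernel_bounded[OF K P sP _ f0 fB]) simp
  also have "\<dots> \<le> (\<integral>x. c2 * h x powr e \<partial>P)"
  proof (rule integral_mono_AE)
    show "integrable P g"
      using g_bd spM gh_P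
      by (intro integrable_bounded_nonneg[OF P.finite_measure_axioms, where B=B]) auto
    show "integrable P (\<lambda>x. c2 * h x powr e)"
      using h_bd spM gh_P c2 e
      by (intro integrable_bounded_nonneg[OF P.finite_measure_axioms, where B="c2 * (B powr \<beta>) powr e"])
         (auto intro!: mult_left_mono powr_mono2)
    show "AE x in P. g x \<le> c2 * h x powr e"
      using dom2 AE_space
    proof eventually_elim
      case (elim x)
      then show ?case unfolding g_def h_def e_def \<beta>_def
        using renyi_dominatedD[OF elim(1) prob_algebra_kernelD(2)[OF K] _ f0 fB] spM by auto
    qed
  qed
  also have "\<dots> = c2 * (\<integral>x. h x powr e \<partial>P)" by simp
  also have "\<dots> \<le> c2 * (c1 * (\<integral>x. (h x powr e) powr \<beta> \<partial>Q) powr e)"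
    unfolding e_def \<beta>_def using c2
    by (intro mult_left_mono renyi_dominatedD[OF dom1 sP, of _ "(B powr \<beta>) powr e"])
       (use h_bd e in \<open>auto intro!: powr_mono2 simp: e_def\<close>)
  also have "(\<integral>x. (h x powr e) powr \<beta> \<partial>Q) = (\<integral>x. h x \<partial>Q)"
    using h_bd spM by (intro Bochner_Integration.integral_cong) (auto simp: powr_powr e)
  also have "\<dots> = (\<integral>y. f y powr \<beta> \<partial>(Q \<bind> K'))"
    unfolding h_def using f\<beta>B by (intro integral_bind_kernel_bounded[OF K' Q sQ, symmetric]) auto
  finally show ?thesis
    unfolding e_def \<beta>_def by (simp add: ac_simps)
qed


lemma renyi_dominated_bind:
  assumes a: "\<alpha> > 1" and P: "prob_space P" and Q: "prob_space Q"
    and sP: "sets P = sets M" and sQ: "sets Q = sets M"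
    and K: "K \<in> M \<rightarrow>\<^sub>M prob_algebra N" and K': "K' \<in> M \<rightarrow>\<^sub>M prob_algebra N"
    and dom1: "renyi_dominated \<alpha> P Q c1" and dom2: "AE x in P. renyi_dominated \<alpha> (K x) (K' x) c2"
    and c2: "c2 \<ge> 0"
  shows "renyi_dominated \<alpha> (P \<bind> K) (Q \<bind> K') (c1 * c2)"
  unfolding renyi_dominated_def
proof (intro allI impI)
  fix f :: "_ \<Rightarrow> real"
  assume fm: "f \<in> borel_measurable (P \<bind> K)" and f0: "\<forall>x\<in>space (P \<bind> K). 0 \<le> f x"
    and "\<exists>B. \<forall>x\<in>space (P \<bind> K). f x \<le> B"
  then obtain B where fB: "\<forall>x\<in>space (P \<bind> K). f x \<le> B" by blast
  have sPK: "sets (P \<bind> K) = sets N"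
    by (rule sets_bind'[OF _ K]) (simp add: space_prob_algebra P sP)
  show "(\<integral>y. f y \<partial>(P \<bind> K)) \<le> c1 * c2 * (\<integral>y. f y powr (\<alpha>/(\<alpha>-1)) \<partial>(Q \<bind> K')) powr ((\<alpha>-1)/\<alpha>)"
    using fm f0 fB sets_eq_imp_space_eq[OF sPK] unfolding measurable_cong_sets[OF sPK refl]
    by (intro integral_bind_le_renyi_dominated[OF a P Q sP sQ K K' dom1 dom2 c2]) auto
qed
lemma renyi_dominated_bind_same_kernel:
  assumes a: "\<alpha> > 1" and P: "prob_space P" and Q: "prob_space Q"
    and sP: "sets P = sets M" and sQ: "sets Q = sets M" and K: "K \<in> M \<rightarrow>\<^sub>M prob_algebra N"
    and dom: "renyi_dominated \<alpha> P Q c"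
  shows "renyi_dominated \<alpha> (P \<bind> K) (Q \<bind> K) c"
proof -
  have "AE x in P. renyi_dominated \<alpha> (K x) (K x) 1"
    using sets_eq_imp_space_eq[OF sP]
    by (intro AE_I2) (auto intro: renyi_dominated_refl[OF a] prob_algebra_kernelD(1)[OF K])
  from renyi_dominated_bind[OF a P Q sP sQ K K dom this] show ?thesis by simp
qed

lemma renyi_div_bind_le:
  assumes a: "\<alpha> > 1" and P: "prob_space P" and Q: "prob_space Q"
    and sP: "sets P = sets M" and sQ: "sets Q = sets M"
    and K: "K \<in> M \<rightarrow>\<^sub>M prob_algebra N" and K': "K' \<in> M \<rightarrow>\<^sub>M prob_algebra N"
    and div: "renyi_div \<alpha> P Q \<le> ereal \<gamma>"
    and dom: "AE x in P. renyi_dominated \<alpha> (K x) (K' x) (exp (\<epsilon> * (\<alpha>-1) / \<alpha>))"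
  shows "renyi_div \<alpha> (P \<bind> K) (Q \<bind> K') \<le> ereal (\<gamma> + \<epsilon>)"
proof -
  have PQ: "P \<in> space (prob_algebra M)" "Q \<in> space (prob_algebra M)"
    using P Q sP sQ by (auto simp: space_prob_algebra)
  have "renyi_dominated \<alpha> (P \<bind> K) (Q \<bind> K') (exp (\<gamma> * (\<alpha>-1) / \<alpha>) * exp (\<epsilon> * (\<alpha>-1) / \<alpha>))"
    using renyi_dominated_of_renyi_div[OF a P Q _ div] sP sQ
    by (intro renyi_dominated_bind[OF a P Q sP sQ K K' _ dom]) auto
  then have "renyi_div \<alpha> (P \<bind> K) (Q \<bind> K')
      \<le> ereal (\<alpha> * ln (exp (\<gamma> * (\<alpha>-1) / \<alpha>) * exp (\<epsilon> * (\<alpha>-1) / \<alpha>)) / (\<alpha> - 1))"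
    by (intro renyi_div_le_of_renyi_dominated[OF a prob_space_bind'[OF PQ(1) K] prob_space_bind'[OF PQ(2) K']])
       (simp_all add: sets_bind'[OF PQ(1) K] sets_bind'[OF PQ(2) K'])
  also have "\<alpha> * ln (exp (\<gamma> * (\<alpha>-1) / \<alpha>) * exp (\<epsilon> * (\<alpha>-1) / \<alpha>)) / (\<alpha> - 1) = \<gamma> + \<epsilon>"
    using a by (simp add: ln_mult field_simps)
  finally show ?thesis .
qed
definition gauss_density :: "real \<Rightarrow> 'a::euclidean_space \<Rightarrow> 'a \<Rightarrow> real" where
  "gauss_density s m x = (\<Prod>b\<in>Basis. normal_density (m \<bullet> b) s (x \<bullet> b))"

abbreviation gauss_measure :: "real \<Rightarrow> 'a::euclidean_space \<Rightarrow> 'a measure" where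
  "gauss_measure s m \<equiv> density lborel (\<lambda>x. ennreal (gauss_density s m x))"

lemma gauss_density_pos: "s > 0 \<Longrightarrow> gauss_density s m x > 0"
  unfolding gauss_density_def by (intro prod_pos normal_density_pos)

lemma gauss_density_measurable[measurable]: "gauss_density s m \<in> borel_measurable borel"
  unfolding gauss_density_def by measurable

lemma nn_integral_gauss_density: "s > 0 \<Longrightarrow> (\<integral>\<^sup>+x. ennreal (gauss_density s m x) \<partial>lborel) = 1"
proof -
  assume s: "s > 0"
  have "(\<integral>\<^sup>+x. ennreal (gauss_density s m x) \<partial>lborel) =
        (\<integral>\<^sup>+x. (\<Prod>b\<in>Basis. ennreal (normal_density (m \<bullet> b) s (x \<bullet> b))) \<partial>lborel)"
    unfolding gauss_density_def by (subst prod_ennreal) auto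
  also have "\<dots> = (\<Prod>b\<in>Basis. (\<integral>\<^sup>+x. ennreal (normal_density (m \<bullet> b) s x) \<partial>lborel))"
    by (rule nn_integral_lborel_prod) auto
  also have "\<dots> = 1" using s by (simp add: nn_integral_eq_integral)
  finally show ?thesis .
qed

lemma integral_gauss_density: "s > 0 \<Longrightarrow> (\<integral>x. gauss_density s m x \<partial>lborel) = 1"
  using nn_integral_gauss_density[of s m] gauss_density_pos[of s m]
  by (subst integral_eq_nn_integral) (auto intro!: AE_I2 less_imp_le)

lemma integrable_gauss_density: "s > 0 \<Longrightarrow> integrable lborel (gauss_density s m)"
  using nn_integral_gauss_density[of s m] gauss_density_pos[of s m]
  by (intro integrableI_nonneg) (auto intro!: AE_I2 less_imp_le)

lemma prob_space_gauss_measure: "s > 0 \<Longrightarrow> prob_space (gauss_measure s m)"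
  by (rule prob_spaceI) (simp add: emeasure_density nn_integral_gauss_density)

lemma gauss_density_shift: "gauss_density s \<delta> (\<delta> + x) = gauss_density s 0 x"
  unfolding gauss_density_def normal_density_def by (simp add: inner_add_left)

lemma distr_gauss_measure_plus:
  fixes \<delta> :: "'a::euclidean_space"
  shows "distr (gauss_measure s 0) borel (\<lambda>x. x + \<delta>) = gauss_measure s \<delta>"
proof (rule measure_eqI)
  fix A assume "A \<in> sets (distr (gauss_measure s 0) borel (\<lambda>x. x + \<delta>))"
  then have [measurable]: "A \<in> sets borel" by simp
  have "emeasure (distr (gauss_measure s 0) borel (\<lambda>x. x + \<delta>)) A =
        (\<integral>\<^sup>+x. ennreal (gauss_density s 0 x) * indicator A (x + \<delta>) \<partial>lborel)"
  proof -
    have "(\<lambda>x. x + \<delta>) -` A \<in> sets lborel"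
      using measurable_sets[of "\<lambda>x. x + \<delta>" borel borel A] by simp
    then show ?thesis
      by (subst emeasure_distr, simp, simp, subst emeasure_density)
         (auto intro!: nn_integral_cong split: split_indicator)
  qed
  also have "\<dots> = (\<integral>\<^sup>+x. ennreal (gauss_density s \<delta> (\<delta> + x)) * indicator A (\<delta> + x) \<partial>lborel)"
    using gauss_density_shift[of s \<delta>] by (simp add: add.commute)
  also have "\<dots> = (\<integral>\<^sup>+y. ennreal (gauss_density s \<delta> y) * indicator A y \<partial>distr lborel borel ((+) \<delta>))"
    by (subst nn_integral_distr) auto
  also have "\<dots> = emeasure (gauss_measure s \<delta>) A"
    by (simp add: lborel_distr_plus emeasure_density)
  finally show "emeasure (distr (gauss_measure s 0) borel (\<lambda>x. x + \<delta>)) A = emeasure (gauss_measure s \<delta>) A" .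
qed simp

lemma normal_density_ratio_powr:
  assumes s: "s > 0"
  shows "normal_density d s t * (normal_density 0 s t / normal_density d s t) powr \<alpha> =
         exp (\<alpha> * (\<alpha> - 1) * d\<^sup>2 / (2 * s\<^sup>2)) * normal_density ((1 - \<alpha>) * d) s t"
proof -
  define C where "C = 1 / sqrt (2 * pi * s\<^sup>2)"
  have C: "C > 0" unfolding C_def using s by simp
  have r: "normal_density 0 s t / normal_density d s t = exp (((t - d)\<^sup>2 - t\<^sup>2) / (2 * s\<^sup>2))"
    unfolding normal_density_def C_def[symmetric] using C
    by (simp add: exp_diff[symmetric] diff_divide_distrib)
  have "normal_density d s t * (normal_density 0 s t / normal_density d s t) powr \<alpha> =
        normal_density d s t * exp (\<alpha> * (((t - d)\<^sup>2 - t\<^sup>2) / (2 * s\<^sup>2)))"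
    unfolding r by (simp add: powr_def)
  also have "\<dots> = C * exp (-(t - d)\<^sup>2 / (2 * s\<^sup>2) + \<alpha> * (((t - d)\<^sup>2 - t\<^sup>2) / (2 * s\<^sup>2)))"
    unfolding normal_density_def C_def[symmetric] by (simp add: exp_add[symmetric] algebra_simps)
  also have "-(t - d)\<^sup>2 / (2 * s\<^sup>2) + \<alpha> * (((t - d)\<^sup>2 - t\<^sup>2) / (2 * s\<^sup>2)) =
             \<alpha> * (\<alpha> - 1) * d\<^sup>2 / (2 * s\<^sup>2) + (-(t - (1 - \<alpha>) * d)\<^sup>2 / (2 * s\<^sup>2))"
    using s by (simp add: field_simps power2_eq_square)
  also have "C * exp \<dots> = exp (\<alpha> * (\<alpha> - 1) * d\<^sup>2 / (2 * s\<^sup>2)) * normal_density ((1 - \<alpha>) * d) s t"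
    unfolding normal_density_def C_def[symmetric] by (simp add: exp_add[symmetric])
  finally show ?thesis .
qed

lemma gauss_density_ratio_powr:
  fixes \<delta> x :: "'a::euclidean_space"
  assumes s: "s > 0"
  shows "gauss_density s \<delta> x * (gauss_density s 0 x / gauss_density s \<delta> x) powr \<alpha> =
         exp (\<alpha> * (\<alpha> - 1) * (\<delta> \<bullet> \<delta>) / (2 * s\<^sup>2)) * gauss_density s ((1 - \<alpha>) *\<^sub>R \<delta>) x"
proof -
  have "gauss_density s \<delta> x * (gauss_density s 0 x / gauss_density s \<delta> x) powr \<alpha> =
       (\<Prod>b\<in>Basis. normal_density (\<delta> \<bullet> b) s (x \<bullet> b) *
          (normal_density 0 s (x \<bullet> b) / normal_density (\<delta> \<bullet> b) s (x \<bullet> b)) powr \<alpha>)"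
    unfolding gauss_density_def by (simp add: prod_dividef[symmetric] prod_powr_distrib prod.distrib)
  also have "\<dots> = (\<Prod>b\<in>Basis. exp (\<alpha> * (\<alpha> - 1) * (\<delta> \<bullet> b)\<^sup>2 / (2 * s\<^sup>2)) *
                     normal_density ((1 - \<alpha>) * (\<delta> \<bullet> b)) s (x \<bullet> b))"
    using s by (simp add: normal_density_ratio_powr)
  also have "\<dots> = exp (\<Sum>b\<in>Basis. \<alpha> * (\<alpha> - 1) * (\<delta> \<bullet> b)\<^sup>2 / (2 * s\<^sup>2)) * gauss_density s ((1 - \<alpha>) *\<^sub>R \<delta>) x"
    unfolding gauss_density_def by (simp add: prod.distrib exp_sum)
  also have "(\<Sum>b\<in>Basis. \<alpha> * (\<alpha> - 1) * (\<delta> \<bullet> b)\<^sup>2 / (2 * s\<^sup>2)) = \<alpha> * (\<alpha> - 1) * (\<delta> \<bullet> \<delta>) / (2 * s\<^sup>2)"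
    by (simp add: sum_divide_distrib[symmetric] sum_distrib_left[symmetric] euclidean_inner[of \<delta> \<delta>] power2_eq_square)
  finally show ?thesis .
qed

lemma renyi_dominated_gauss_measure:
  fixes \<delta> :: "'a::euclidean_space"
  assumes a: "\<alpha> > 1" and s: "s > 0"
  shows "renyi_dominated \<alpha> (gauss_measure s 0) (gauss_measure s \<delta>) (exp ((\<alpha> - 1) * (\<delta> \<bullet> \<delta>) / (2 * s\<^sup>2)))"
proof -
  define q where "q x = gauss_density s 0 x / gauss_density s \<delta> x" for x
  define E where "E = exp (\<alpha> * (\<alpha> - 1) * (\<delta> \<bullet> \<delta>) / (2 * s\<^sup>2))"
  note pos = gauss_density_pos[OF s]
  have [measurable]: "q \<in> borel_measurable borel" unfolding q_def by measurable
  have q0: "\<And>x. 0 \<le> q x" unfolding q_def using pos by (auto intro: divide_nonneg_pos less_imp_le)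
  have dens: "gauss_measure s 0 = density (gauss_measure s \<delta>) (\<lambda>x. ennreal (q x))"
    by (subst density_density_eq)
       (auto simp: q_def pos less_imp_le ennreal_mult''[symmetric] pos[THEN less_imp_neq, symmetric]
             intro!: density_cong AE_I2)
  have pt: "gauss_density s \<delta> x * q x powr \<alpha> = E * gauss_density s ((1 - \<alpha>) *\<^sub>R \<delta>) x" for x
    unfolding q_def E_def by (rule gauss_density_ratio_powr[OF s])
  have iq: "integrable (gauss_measure s \<delta>) (\<lambda>x. q x powr \<alpha>)"
    using pos integrable_gauss_density[OF s, of "(1 - \<alpha>) *\<^sub>R \<delta>"]
    by (subst integrable_density) (auto simp: pt intro!: AE_I2 less_imp_le)
  have "(\<integral>x. q x powr \<alpha> \<partial>gauss_measure s \<delta>) = (\<integral>x. E * gauss_density s ((1 - \<alpha>) *\<^sub>R \<delta>) x \<partial>lborel)"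
    using pos by (subst integral_density) (auto simp: pt intro!: AE_I2 less_imp_le)
  also have "\<dots> = E" by (simp add: integral_gauss_density[OF s])
  finally have "(\<integral>x. q x powr \<alpha> \<partial>gauss_measure s \<delta>) powr (1/\<alpha>) = exp ((\<alpha> - 1) * (\<delta> \<bullet> \<delta>) / (2 * s\<^sup>2))"
    using a unfolding E_def by (simp add: powr_def)
  then show ?thesis
    using renyi_dominated_density[OF a prob_space_gauss_measure[OF s] _ q0 dens iq] by (simp add: q_def)
qed

lemma renyi_dominated_gauss_bind:
  fixes \<delta> :: "'a::euclidean_space"
  assumes a: "\<alpha> > 1" and s: "s > 0"
    and K: "K \<in> borel \<rightarrow>\<^sub>M prob_algebra N" and K': "K' \<in> borel \<rightarrow>\<^sub>M prob_algebra N"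
    and dom: "\<And>x. renyi_dominated \<alpha> (K x) (K' (x - \<delta>)) c" and c: "c \<ge> 0"
  shows "renyi_dominated \<alpha> (gauss_measure s 0 \<bind> K) (gauss_measure s 0 \<bind> K')
           (exp ((\<alpha> - 1) * (\<delta> \<bullet> \<delta>) / (2 * s\<^sup>2)) * c)"
proof -
  note prob = prob_space_gauss_measure[OF s]
  have K'_shift: "(\<lambda>x. K' (x - \<delta>)) \<in> borel \<rightarrow>\<^sub>M prob_algebra N"
    using K' by (rule measurable_compose[rotated]) simp
  have "distr (gauss_measure s 0) borel (\<lambda>x. x + \<delta>) \<bind> (\<lambda>x. K' (x - \<delta>)) =
        gauss_measure s 0 \<bind> (\<lambda>x. K' (x + \<delta> - \<delta>))"
    by (rule bind_distr[OF _ measurable_prob_algebraD[OF K'_shift]])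
       (simp_all add: prob_space.not_empty[OF prob])
  then have "gauss_measure s \<delta> \<bind> (\<lambda>x. K' (x - \<delta>)) = gauss_measure s 0 \<bind> K'"
    by (simp add: distr_gauss_measure_plus)
  moreover have "renyi_dominated \<alpha> (gauss_measure s 0 \<bind> K) (gauss_measure s \<delta> \<bind> (\<lambda>x. K' (x - \<delta>)))
           (exp ((\<alpha> - 1) * (\<delta> \<bullet> \<delta>) / (2 * s\<^sup>2)) * c)"
    by (rule renyi_dominated_bind[OF a prob prob _ _ K K'_shift renyi_dominated_gauss_measure[OF a s]
          AE_I2[OF dom] c]) simp_all
  ultimately show ?thesis by simp
qed

lemma prod_Basis_matrix:
  fixes F :: "real \<Rightarrow> 'b::comm_monoid_mult" and N :: "real^'h::finite^'n::finite"
  shows "(\<Prod>b\<in>Basis. F (N \<bullet> b)) = (\<Prod>i\<in>UNIV. \<Prod>k\<in>UNIV. F (N $ i $ k))"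
proof -
  have Basis: "(Basis :: (real^'h^'n) set) = (\<lambda>(i, k). axis i (axis k 1)) ` (UNIV \<times> UNIV)"
    unfolding Basis_vec_def by auto
  have inj: "inj_on (\<lambda>(i, k). (axis i (axis k 1) :: real^'h^'n)) (UNIV \<times> UNIV)"
    by (auto simp: inj_on_def axis_eq_axis)
  have "(\<Prod>b\<in>Basis. F (N \<bullet> b)) = (\<Prod>p\<in>UNIV \<times> UNIV. F (N $ fst p $ snd p))"
    unfolding Basis by (subst prod.reindex[OF inj]) (auto simp: inner_axis case_prod_beta intro!: prod.cong)
  then show ?thesis
    unfolding prod.cartesian_product by (simp add: case_prod_beta)
qed

lemma gauss_noise_eq_gauss_measure: "gauss_noise s = (gauss_measure s 0 :: (real^'h::finite^'n::finite) measure)"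
proof -
  have "(\<Prod>i\<in>UNIV. \<Prod>k\<in>UNIV. ennreal (normal_density 0 s (x $ i $ k))) = ennreal (gauss_density s 0 x)"
    for x :: "real^'h^'n"
    unfolding gauss_density_def by (simp add: prod_Basis_matrix prod_ennreal prod_nonneg)
  then show ?thesis unfolding gauss_noise_def by simp
qed

lemma vec_nth_measurable[measurable (raw)]:
  fixes f :: "'a \<Rightarrow> 'b::real_normed_vector^'n::finite"
  assumes "f \<in> M \<rightarrow>\<^sub>M borel"
  shows "(\<lambda>x. f x $ i) \<in> M \<rightarrow>\<^sub>M borel"
  using assms by (rule measurable_compose) (intro borel_measurable_continuous_onI continuous_intros)

lemma Zmat_measurable[measurable (raw)]:
  fixes A :: "'n::finite \<Rightarrow> 'n \<Rightarrow> bool"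
  assumes "f \<in> M \<rightarrow>\<^sub>M borel" "g \<in> M \<rightarrow>\<^sub>M borel" "h \<in> M \<rightarrow>\<^sub>M borel"
  shows "(\<lambda>x. Zmat A (f x) (g x) (h x)) \<in> M \<rightarrow>\<^sub>M borel"
proof -
  have "continuous_on UNIV (\<lambda>p::((real^'h::finite^'n) \<times> (real^'h)) \<times> (real^'h^'n).
          Zmat A (fst (fst p)) (snd (fst p)) (snd p))"
    unfolding Zmat_def by (intro continuous_intros)
  then have Z: "(\<lambda>p::((real^'h::finite^'n) \<times> (real^'h)) \<times> (real^'h^'n).
          Zmat A (fst (fst p)) (snd (fst p)) (snd p)) \<in> borel \<rightarrow>\<^sub>M borel"
    by (rule borel_measurable_continuous_onI)
  have "(\<lambda>x. ((f x, g x), h x)) \<in> M \<rightarrow>\<^sub>M borel"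
    using assms
    by (subst borel_prod[symmetric], intro measurable_Pair, subst borel_prod[symmetric], intro measurable_Pair)
       auto
  from measurable_compose[OF this Z] show ?thesis by simp
qed

text \<open>Row \<open>i \<noteq> r\<close> of \<open>A W\<close> depends on the replaced node only through the summand \<open>W\<^sub>r\<close>, present
  iff \<open>A i r\<close>; so the two noiseless features differ off row \<open>r\<close> by \<open>0\<close> or \<open>\<plusminus>W\<^sub>r\<close>, and at most
  \<open>out_degree A r + out_degree A' r\<close> rows differ at all.\<close>
lemma Zmat_row_shift:
  fixes A A' :: "'n::finite \<Rightarrow> 'n \<Rightarrow> bool" and W :: "real^'h::finite^'n" and b :: "real^'h"
  assumes eqA: "\<forall>i j. i \<noteq> r \<and> j \<noteq> r \<longrightarrow> A i j = A' i j" and W: "norm (W $ r) = 1"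
  obtains \<delta> where "\<delta> \<bullet> \<delta> \<le> real (out_degree A r) + real (out_degree A' r)"
    and "\<And>N i. i \<noteq> r \<Longrightarrow> Zmat A' W b (N - \<delta>) $ i = Zmat A W b N $ i"
proof
  define \<delta> where "\<delta> = (\<chi> i. if i = r then 0 else (Zmat A' W b 0 - Zmat A W b 0) $ i)"
  have Zmat_add: "Zmat A W b N = Zmat A W b 0 + N" for A N
    unfolding Zmat_def by (simp add: vec_eq_iff)
  show "Zmat A' W b (N - \<delta>) $ i = Zmat A W b N $ i" if "i \<noteq> r" for N i
    using that by (subst (1 2) Zmat_add) (simp add: \<delta>_def)
  have row: "\<delta> $ i \<bullet> \<delta> $ i \<le> of_bool (A i r) + of_bool (A' i r)" for i
  proof (cases "i = r")
    case False
    have same: "{j. A' i j} - {r} = {j. A i j} - {r}" using eqA False by auto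
    have split: "(\<Sum>j\<in>S. W $ j) = (\<Sum>j\<in>S - {r}. W $ j) + (if r \<in> S then W $ r else 0)" for S
      by (simp add: sum.remove add.commute)
    have "\<delta> $ i = (\<Sum>j\<in>{j. A' i j}. W $ j) - (\<Sum>j\<in>{j. A i j}. W $ j)"
      using False by (simp add: \<delta>_def Zmat_def)
    also have "\<dots> = (if A' i r then W $ r else 0) - (if A i r then W $ r else 0)"
      by (subst (1 2) split) (simp add: same)
    finally have "\<delta> $ i = (if A' i r then W $ r else 0) - (if A i r then W $ r else 0)" .
    then show ?thesis
      using W by (cases "A i r"; cases "A' i r") (auto simp: dot_square_norm)
  qed (simp add: \<delta>_def)
  have "\<delta> \<bullet> \<delta> = (\<Sum>i\<in>UNIV. \<delta> $ i \<bullet> \<delta> $ i)" by (simp add: inner_vec_def)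
  also have "\<dots> \<le> (\<Sum>i\<in>UNIV. of_bool (A i r) + of_bool (A' i r))"
    by (intro sum_mono row)
  also have "\<dots> = real (out_degree A r) + real (out_degree A' r)"
    by (simp add: sum.distrib out_degree_def)
  finally show "\<delta> \<bullet> \<delta> \<le> real (out_degree A r) + real (out_degree A' r)" .
qed

lemma measurable_compose_case_prod3:
  assumes h: "(\<lambda>(a, b, c). h a b c) \<in> N1 \<Otimes>\<^sub>M (N2 \<Otimes>\<^sub>M N3) \<rightarrow>\<^sub>M L"
    and "t \<in> M \<rightarrow>\<^sub>M N1" "u \<in> M \<rightarrow>\<^sub>M N2" "z \<in> M \<rightarrow>\<^sub>M N3"
  shows "(\<lambda>x. h (t x) (u x) (z x)) \<in> M \<rightarrow>\<^sub>M L"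
  using measurable_compose[OF _ h, of "\<lambda>x. (t x, u x, z x)"] assms by simp

definition dpdgc_readout ::
  "'y measure \<Rightarrow> 'p measure \<Rightarrow> ('p \<Rightarrow> real^'f \<Rightarrow> real^'h \<Rightarrow> 'y) \<Rightarrow> real^'f \<Rightarrow>
   (real^'h::finite^'n::finite) \<times> (real^'h) \<Rightarrow> real^'h \<Rightarrow> 'p \<Rightarrow> ('y \<times> (((real^'h^'n) \<times> (real^'h)) \<times> 'p)) measure"
  where "dpdgc_readout Yo P g x w z \<theta> = return (Yo \<Otimes>\<^sub>M (borel \<Otimes>\<^sub>M P)) (g \<theta> x z, (w, \<theta>))"

lemma measurable_dpdgc_readout:
  assumes g_meas: "(\<lambda>(\<theta>, x, z). g \<theta> x z) \<in> P \<Otimes>\<^sub>M (borel \<Otimes>\<^sub>M borel) \<rightarrow>\<^sub>M Yo"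
    and [measurable]: "x \<in> M \<rightarrow>\<^sub>M borel" "w \<in> M \<rightarrow>\<^sub>M borel \<Otimes>\<^sub>M borel" "z \<in> M \<rightarrow>\<^sub>M borel" "t \<in> M \<rightarrow>\<^sub>M P"
  shows "(\<lambda>y. dpdgc_readout Yo P g (x y) (w y) (z y) (t y)) \<in> M \<rightarrow>\<^sub>M prob_algebra (Yo \<Otimes>\<^sub>M (borel \<Otimes>\<^sub>M P))"
proof -
  note [measurable (raw)] = measurable_compose_case_prod3[OF g_meas]
  show ?thesis unfolding dpdgc_readout_def borel_prod[symmetric] by measurable
qed

definition dpdgc_kernel ::
  "real \<Rightarrow> (real^'f^'n \<Rightarrow> ('n \<Rightarrow> 'c option) \<Rightarrow> real^'h^'n \<Rightarrow> 'p measure) \<Rightarrow> 'p measure \<Rightarrow>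
   ('p \<Rightarrow> real^'f \<Rightarrow> real^'h \<Rightarrow> 'y) \<Rightarrow> 'y measure \<Rightarrow> 'n \<Rightarrow> ('f, 'n::finite, 'c) dataset \<Rightarrow>
   (real^'h::finite^'n) \<times> (real^'h) \<Rightarrow> ('y \<times> (((real^'h^'n) \<times> (real^'h)) \<times> 'p)) measure" where
  "dpdgc_kernel s B P g Yo v D w =
     (case D of (X, Y, A) \<Rightarrow> gauss_noise s \<bind> (\<lambda>N.
        let Z = Zmat A (fst w) (snd w) N in B X Y Z \<bind> dpdgc_readout Yo P g (X $ v) w (Z $ v)))"

lemma dpdgc_mech_eq_bind: "dpdgc_mech WA s B P g Yo v D = WA D \<bind> dpdgc_kernel s B P g Yo v D"
  unfolding dpdgc_mech_def dpdgc_kernel_def dpdgc_readout_def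
  by (simp add: case_prod_unfold split: prod.split)

lemma dpdgc_kernel_measurable:
  assumes s: "s > 0" and [measurable]: "B X Y \<in> borel \<rightarrow>\<^sub>M prob_algebra P"
    and g_meas: "(\<lambda>(\<theta>, x, z). g \<theta> x z) \<in> P \<Otimes>\<^sub>M (borel \<Otimes>\<^sub>M borel) \<rightarrow>\<^sub>M Yo"
  shows "dpdgc_kernel s B P g Yo v (X, Y, A) \<in> borel \<rightarrow>\<^sub>M prob_algebra (Yo \<Otimes>\<^sub>M (borel \<Otimes>\<^sub>M P))"
proof -
  note [measurable (raw)] = measurable_dpdgc_readout[OF g_meas]
  have [measurable]: "(\<lambda>x. gauss_noise s) \<in> M \<rightarrow>\<^sub>M prob_algebra borel" for M :: "'q measure"
    using prob_space_gauss_measure[OF s]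
    by (intro measurable_const) (simp add: space_prob_algebra gauss_noise_eq_gauss_measure)
  have "dpdgc_kernel s B P g Yo v (X, Y, A) \<in> (borel \<Otimes>\<^sub>M borel) \<rightarrow>\<^sub>M prob_algebra (Yo \<Otimes>\<^sub>M (borel \<Otimes>\<^sub>M P))"
    unfolding dpdgc_kernel_def[abs_def] by (simp add: Let_def) measurable
  then show ?thesis by (simp only: borel_prod)
qed

lemma renyi_dominated_dpdgc_kernel:
  fixes A A' :: "'n::finite \<Rightarrow> 'n \<Rightarrow> bool" and w :: "(real^'h::finite^'n) \<times> (real^'h)"
  assumes a: "\<alpha> > 1" and s: "s > 0"
    and BK: "B X Y \<in> borel \<rightarrow>\<^sub>M prob_algebra P" and BK': "B X' Y' \<in> borel \<rightarrow>\<^sub>M prob_algebra P"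
    and g_meas: "(\<lambda>(\<theta>, x, z). g \<theta> x z) \<in> P \<Otimes>\<^sub>M (borel \<Otimes>\<^sub>M borel) \<rightarrow>\<^sub>M Yo"
    and B_dom: "\<And>Z Z'. (\<forall>i. i \<noteq> r \<longrightarrow> Z $ i = Z' $ i) \<Longrightarrow>
                  renyi_dominated \<alpha> (B X Y Z) (B X' Y' Z') (exp (\<gamma> * (\<alpha>-1) / \<alpha>))"
    and v: "v \<noteq> r" "X $ v = X' $ v"
    and eqA: "\<forall>i j. i \<noteq> r \<and> j \<noteq> r \<longrightarrow> A i j = A' i j"
    and deg: "real (out_degree A r) + real (out_degree A' r) \<le> d" and W: "norm (fst w $ r) = 1"
  shows "renyi_dominated \<alpha> (dpdgc_kernel s B P g Yo v (X, Y, A) w) (dpdgc_kernel s B P g Yo v (X', Y', A') w)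
           (exp ((\<gamma> + d * \<alpha> / (2 * s\<^sup>2)) * (\<alpha>-1) / \<alpha>))"
proof -
  obtain \<delta> where \<delta>: "\<delta> \<bullet> \<delta> \<le> real (out_degree A r) + real (out_degree A' r)"
    and Z\<delta>: "\<And>N i. i \<noteq> r \<Longrightarrow> Zmat A' (fst w) (snd w) (N - \<delta>) $ i = Zmat A (fst w) (snd w) N $ i"
    using Zmat_row_shift[OF eqA W] by metis
  note [measurable (raw)] = measurable_dpdgc_readout[OF g_meas] and [measurable] = BK BK'
  define K where "K X Y A N = B X Y (Zmat A (fst w) (snd w) N) \<bind>
      dpdgc_readout Yo P g (X $ v) w (Zmat A (fst w) (snd w) N $ v)" for X Y A N
  have kernels: "dpdgc_kernel s B P g Yo v (X, Y, A) w = gauss_measure s 0 \<bind> K X Y A"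
    "dpdgc_kernel s B P g Yo v (X', Y', A') w = gauss_measure s 0 \<bind> K X' Y' A'"
    unfolding dpdgc_kernel_def K_def gauss_noise_eq_gauss_measure by (simp_all add: Let_def)
  have KM: "K X Y A \<in> borel \<rightarrow>\<^sub>M prob_algebra (Yo \<Otimes>\<^sub>M (borel \<Otimes>\<^sub>M P))"
    "K X' Y' A' \<in> borel \<rightarrow>\<^sub>M prob_algebra (Yo \<Otimes>\<^sub>M (borel \<Otimes>\<^sub>M P))"
    unfolding K_def by (measurable; simp add: space_pair_measure)+
  have dom_N: "renyi_dominated \<alpha> (K X Y A N) (K X' Y' A' (N - \<delta>)) (exp (\<gamma> * (\<alpha>-1) / \<alpha>))" for N
  proof -
    define R where "R = dpdgc_readout Yo P g (X $ v) w (Zmat A (fst w) (snd w) N $ v)"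
    have "K X' Y' A' (N - \<delta>) = B X' Y' (Zmat A' (fst w) (snd w) (N - \<delta>)) \<bind> R"
      unfolding K_def R_def using Z\<delta> v by simp
    moreover have "R \<in> P \<rightarrow>\<^sub>M prob_algebra (Yo \<Otimes>\<^sub>M (borel \<Otimes>\<^sub>M P))"
      unfolding R_def by (rule measurable_dpdgc_readout[OF g_meas]) (auto simp: space_pair_measure)
    ultimately show ?thesis
      unfolding K_def R_def[symmetric] using prob_algebra_kernelD[OF BK] prob_algebra_kernelD[OF BK'] Z\<delta>
      by (simp only:) (intro renyi_dominated_bind_same_kernel[OF a] B_dom; simp)
  qed
  have "exp ((\<alpha> - 1) * (\<delta> \<bullet> \<delta>) / (2 * s\<^sup>2)) * exp (\<gamma> * (\<alpha>-1) / \<alpha>)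
      \<le> exp ((\<alpha> - 1) * d / (2 * s\<^sup>2)) * exp (\<gamma> * (\<alpha>-1) / \<alpha>)"
    using \<delta> deg a by (intro mult_right_mono exp_mono divide_right_mono mult_left_mono) auto
  also have "\<dots> = exp ((\<gamma> + d * \<alpha> / (2 * s\<^sup>2)) * (\<alpha>-1) / \<alpha>)"
    using a s by (simp add: exp_add[symmetric] field_simps)
  finally show ?thesis
    unfolding kernels by (rule renyi_dominated_mono[OF renyi_dominated_gauss_bind[OF a s KM dom_N exp_ge_zero]])
qed

theorem corollaryH2:
  fixes WA :: "('f::finite, 'n::finite, 'c) dataset \<Rightarrow> ((real^'h::finite^'n) \<times> (real^'h)) measure"
    and B :: "real^'f^'n \<Rightarrow> ('n \<Rightarrow> 'c option) \<Rightarrow> real^'h^'n \<Rightarrow> 'p measure"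
    and P :: "'p measure"
    and g :: "'p \<Rightarrow> real^'f \<Rightarrow> real^'h \<Rightarrow> 'y"
    and Yo :: "'y measure"
    and L :: "'n set"
    and \<alpha> s Dg \<gamma>1 \<gamma>2 :: real
  assumes alpha: "\<alpha> > 1" and s: "s > 0" and Dg: "Dg \<ge> 1"
    and WA_prob: "\<And>D. dataset_wf L D \<Longrightarrow> prob_space (WA D)"
    and WA_sets: "\<And>D. dataset_wf L D \<Longrightarrow> sets (WA D) = sets borel"
    and WA_rows: "\<And>D. dataset_wf L D \<Longrightarrow> AE wb in WA D. \<forall>i. norm (fst wb $ i) = 1"
    and B_kernel: "\<And>X Y. labels_wf L Y \<Longrightarrow> B X Y \<in> borel \<rightarrow>\<^sub>M prob_algebra P"
    and g_meas: "(\<lambda>(\<theta>, x, z). g \<theta> x z) \<in> P \<Otimes>\<^sub>M (borel \<Otimes>\<^sub>M borel) \<rightarrow>\<^sub>M Yo"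
    and WA_rdp: "\<And>D D' r. node_adjacent L D D' r \<Longrightarrow> deg_bounded Dg D \<Longrightarrow> deg_bounded Dg D' \<Longrightarrow>
                   renyi_div \<alpha> (WA D) (WA D') \<le> ereal \<gamma>1"
    and B_rdp: "\<And>X Y Z X' Y' Z' r. labels_wf L Y \<Longrightarrow> labels_wf L Y' \<Longrightarrow>
                   (\<forall>i. i \<noteq> r \<longrightarrow> X $ i = X' $ i \<and> Y i = Y' i \<and> Z $ i = Z' $ i) \<Longrightarrow>
                   renyi_div \<alpha> (B X Y Z) (B X' Y' Z') \<le> ereal \<gamma>2"
  shows "\<forall>v D D' r. v \<notin> L \<and> node_adjacent L D D' r \<and> r \<noteq> v \<and>
            deg_bounded Dg D \<and> deg_bounded Dg D' \<longrightarrow>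
            renyi_div \<alpha> (dpdgc_mech WA s B P g Yo v D) (dpdgc_mech WA s B P g Yo v D')
              \<le> ereal (\<gamma>1 + \<gamma>2 + 2 * Dg * \<alpha> / (2 * s\<^sup>2))"
proof (intro allI impI, elim conjE)
  fix v r :: 'n and D D' :: "('f, 'n, 'c) dataset"
  assume "v \<notin> L" and adj: "node_adjacent L D D' r" and vr: "r \<noteq> v"
    and deg: "deg_bounded Dg D" "deg_bounded Dg D'"
  obtain X Y A X' Y' A' where D: "D = (X, Y, A)" and D': "D' = (X', Y', A')" by (metis prod_cases3)
  have wf: "dataset_wf L D" "dataset_wf L D'" and Y: "labels_wf L Y" "labels_wf L Y'"
    and eqXY: "\<forall>i. i \<noteq> r \<longrightarrow> X $ i = X' $ i \<and> Y i = Y' i"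
    and eqA: "\<forall>i j. i \<noteq> r \<and> j \<noteq> r \<longrightarrow> A i j = A' i j"
    using adj unfolding node_adjacent_def dataset_wf_def D D' by auto
  have "real (out_degree A r) \<le> Dg" "real (out_degree A' r) \<le> Dg"
    using deg unfolding deg_bounded_def D D' by auto
  then have deg_r: "real (out_degree A r) + real (out_degree A' r) \<le> 2 * Dg" by linarith
  note BK = B_kernel[OF Y(1), of X] B_kernel[OF Y(2), of X']
  have dom_B: "renyi_dominated \<alpha> (B X Y Z) (B X' Y' Z') (exp (\<gamma>2 * (\<alpha>-1) / \<alpha>))"
    if "\<forall>i. i \<noteq> r \<longrightarrow> Z $ i = Z' $ i" for Z Z'
    using prob_algebra_kernelD[OF BK(1), of Z] prob_algebra_kernelD[OF BK(2), of Z'] that eqXY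
    by (intro renyi_dominated_of_renyi_div[OF alpha] B_rdp[OF Y, where r=r]) auto
  have dom_K: "AE w in WA D. renyi_dominated \<alpha> (dpdgc_kernel s B P g Yo v D w) (dpdgc_kernel s B P g Yo v D' w)
      (exp ((\<gamma>2 + 2 * Dg * \<alpha> / (2 * s\<^sup>2)) * (\<alpha>-1) / \<alpha>))"
    using WA_rows[OF wf(1)] unfolding D D'
    by eventually_elim (rule renyi_dominated_dpdgc_kernel[OF alpha s BK g_meas dom_B _ _ eqA deg_r]; use vr eqXY in auto)
  show "renyi_div \<alpha> (dpdgc_mech WA s B P g Yo v D) (dpdgc_mech WA s B P g Yo v D')
      \<le> ereal (\<gamma>1 + \<gamma>2 + 2 * Dg * \<alpha> / (2 * s\<^sup>2))"
    unfolding dpdgc_mech_eq_bind add.assoc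
    using WA_prob wf WA_sets dpdgc_kernel_measurable[where B=B and X=X, OF s BK(1) g_meas]
      dpdgc_kernel_measurable[where B=B and X=X', OF s BK(2) g_meas]
    by (intro renyi_div_bind_le[OF alpha _ _ _ _ _ _ WA_rdp[OF adj deg] dom_K]) (auto simp: D D')
qed

end
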